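(* Let $n=n(\theta)$ be positive integers with $n\to\infty$ and $\theta/n\to\infty$ as $\theta\to\infty$. Let $K_n(\theta)$ be a random variable with $P\{K_n(\theta)=k\}=|S_n^k|\theta^k/\theta_{(n)}$, $k=1,\dots,n$, where $\theta_{(n)}=\theta(\theta+1)\cdots(\theta+n-1)$ and $|S_n^k|$ is the coefficient of $\theta^k$ in $\theta_{(n)}$. Then, as $\theta\to\infty$, the family of laws of $K_n(\theta)/n$ satisfies an LDP on $[0,1]$ with speed $n\log\frac\theta n$ and rate function $I(x)=1-x$.
   Context: $K_n(\theta)$ is the number of distinct alleles in a sample of size $n$ from a $PD(\theta)$ population. An LDP with speed $a(\theta)$ uses normalization $a(\theta)^{-1}\log$ as $\theta\to\infty$. *)

theory Defs
  imports "HOL-Analysis.Analysis" "HOL-Combinatorics.Stirling"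
begin

text \<open>Ewens distribution of the number of distinct alleles:
  P{K_n(theta) = k} = |S_n^k| theta^k / theta_(n), where theta_(n) is the rising
  factorial (pochhammer) and |S_n^k| = stirling n k is the unsigned Stirling number of
  the first kind, i.e. the coefficient of theta^k in theta_(n) (lemma stirling_pochhammer).\<close>
definition Kprob :: "nat \<Rightarrow> real \<Rightarrow> nat \<Rightarrow> real" where
  "Kprob n \<theta> k = real (stirling n k) * \<theta> ^ k / pochhammer \<theta> n"

definition lawK :: "nat \<Rightarrow> real \<Rightarrow> real set \<Rightarrow> real" where
  "lawK n \<theta> A = (\<Sum>k\<in>{1..n}. if real k / real n \<in> A then Kprob n \<theta> k else 0)"

definition elog :: "real \<Rightarrow> ereal" where
  "elog x = (if x = 0 then - \<infinity> else ereal (ln x))"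

definition LDP01 :: "(real \<Rightarrow> real set \<Rightarrow> real) \<Rightarrow> (real \<Rightarrow> real) \<Rightarrow> (real \<Rightarrow> real) \<Rightarrow> bool" where
  "LDP01 \<mu> a I \<longleftrightarrow>
     (\<forall>F. closedin (top_of_set {0..1}) F \<longrightarrow>
        Limsup at_top (\<lambda>\<theta>. elog (\<mu> \<theta> F) / ereal (a \<theta>)) \<le> - (INF x\<in>F. ereal (I x))) \<and>
     (\<forall>G. openin (top_of_set {0..1}) G \<longrightarrow>
        Liminf at_top (\<lambda>\<theta>. elog (\<mu> \<theta> G) / ereal (a \<theta>)) \<ge> - (INF x\<in>G. ereal (I x)))"

end

theory Submission
  imports Defs
begin

text \<open>The bounds \<open>k^(n-k) \<le> |S_n^k| \<le> 2^n n^(n-k)\<close> on the Stirling numbers and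
  \<open>\<theta>^n \<le> \<theta>_(n) \<le> (2\<theta>)^n\<close> (for \<open>n \<le> \<theta>\<close>) on the rising factorial give
  \<open>(k/\<theta>)^(n-k) / 2^n \<le> P{K_n = k} \<le> 2^n (n/\<theta>)^(n-k)\<close>.
  On the scale \<open>n log(\<theta>/n)\<close> the factor \<open>2^n\<close>, the at most \<open>n\<close> summands of a probability
  and the factor \<open>(k/n)^(n-k)\<close> are negligible, so \<open>P{K_n = k}\<close> behaves like
  \<open>(\<theta>/n)^(-n(1 - k/n))\<close>. The upper bound sums over \<open>k/n \<in> F\<close>; the lower bound near \<open>x\<close>
  uses the single term \<open>k = \<lceil>xn\<rceil>\<close>.\<close>

lemma stirling_le: "stirling n k \<le> 2 ^ n * n ^ (n - k)"
proof (induction n arbitrary: k)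
  case 0
  then show ?case by (cases k) auto
next
  case (Suc n)
  show ?case
  proof (cases k)
    case (Suc j)
    have "n * stirling n (Suc j) \<le> 2 ^ n * n ^ (n - j)"
    proof (cases "j < n")
      case True
      then have "n * n ^ (n - Suc j) = n ^ (n - j)"
        by (metis Suc_diff_Suc power_Suc)
      then show ?thesis
        using Suc.IH[of "Suc j"] by (metis mult.left_commute mult_le_mono2)
    qed simp
    then have "stirling (Suc n) k \<le> 2 * 2 ^ n * n ^ (n - j)"
      using Suc.IH[of j] Suc by simp
    also have "\<dots> \<le> 2 ^ Suc n * Suc n ^ (Suc n - k)"
      using Suc by (simp add: power_mono)
    finally show ?thesis .
  qed simp
qed

lemma stirling_ge: "1 \<le> k \<Longrightarrow> k \<le> n \<Longrightarrow> k ^ (n - k) \<le> stirling n k"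
proof (induction n arbitrary: k)
  case (Suc n)
  show ?case
  proof (cases "k = Suc n")
    case False
    then have "k \<le> n" using Suc.prems by simp
    then have "k ^ (Suc n - k) \<le> n * stirling n k"
      using Suc.IH[OF Suc.prems(1)] by (simp add: Suc_diff_le mult_le_mono)
    also have "\<dots> \<le> stirling (Suc n) k"
      using Suc.prems(1) by (cases k) auto
    finally show ?thesis .
  qed simp
qed simp

lemma pochhammer_ge_power:
  fixes x :: real
  assumes "0 \<le> x"
  shows "x ^ n \<le> pochhammer x n"
  unfolding pochhammer_prod using prod_mono[of "{0..<n}" "\<lambda>_. x" "\<lambda>i. x + of_nat i"] assms
  by simp

lemma pochhammer_le_power:
  fixes x :: real
  assumes "0 \<le> x"
  shows "pochhammer x n \<le> (x + n) ^ n"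
  unfolding pochhammer_prod using prod_mono[of "{0..<n}" "\<lambda>i. x + of_nat i" "\<lambda>_. x + n"] assms
  by simp

lemma Kprob_nonneg: "0 < \<theta> \<Longrightarrow> 0 \<le> Kprob n \<theta> k"
  unfolding Kprob_def using pochhammer_pos[of \<theta> n] by simp

lemma lawK_nonneg: "0 < \<theta> \<Longrightarrow> 0 \<le> lawK n \<theta> A"
  unfolding lawK_def using Kprob_nonneg by (auto intro!: sum_nonneg)

lemma Kprob_le_lawK:
  assumes "0 < \<theta>" "k \<in> {1..n}" "real k / real n \<in> A"
  shows "Kprob n \<theta> k \<le> lawK n \<theta> A"
  unfolding lawK_def
  using member_le_sum[of k "{1..n}" "\<lambda>k. if real k / real n \<in> A then Kprob n \<theta> k else 0"]
    assms Kprob_nonneg by auto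

lemma Kprob_le:
  assumes "0 < \<theta>" "k \<le> n"
  shows "Kprob n \<theta> k \<le> 2 ^ n * (n / \<theta>) ^ (n - k)"
proof -
  have "real (stirling n k) \<le> 2 ^ n * n ^ (n - k)"
    using stirling_le[of n k] by (metis of_nat_le_iff of_nat_mult of_nat_numeral of_nat_power)
  then have "Kprob n \<theta> k \<le> 2 ^ n * n ^ (n - k) * \<theta> ^ k / pochhammer \<theta> n"
    unfolding Kprob_def using pochhammer_pos[of \<theta> n] assms
    by (intro divide_right_mono mult_right_mono) auto
  also have "\<dots> \<le> 2 ^ n * n ^ (n - k) * \<theta> ^ k / \<theta> ^ n"
    using pochhammer_ge_power[of \<theta> n] pochhammer_pos[of \<theta> n] assms
    by (intro divide_left_mono) auto
  also have "\<dots> = 2 ^ n * (n / \<theta>) ^ (n - k)"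
    using assms le_Suc_ex[of k n] by (auto simp add: power_add power_divide)
  finally show ?thesis .
qed

lemma Kprob_ge:
  assumes "0 < \<theta>" "1 \<le> k" "k \<le> n" "real n \<le> \<theta>"
  shows "(k / \<theta>) ^ (n - k) / 2 ^ n \<le> Kprob n \<theta> k"
proof -
  obtain m where n: "n = k + m"
    using assms le_Suc_ex by blast
  have "(k / \<theta>) ^ (n - k) / 2 ^ n = k ^ (n - k) * \<theta> ^ k / (2 * \<theta>) ^ n"
    using assms unfolding n by (simp add: power_add power_divide power_mult_distrib)
  also have "\<dots> \<le> k ^ (n - k) * \<theta> ^ k / pochhammer \<theta> n"
  proof (rule divide_left_mono)
    show "pochhammer \<theta> n \<le> (2 * \<theta>) ^ n"
      using pochhammer_le_power[of \<theta> n] power_mono[of "\<theta> + n" "2 * \<theta>" n] assms by simp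
  qed (use pochhammer_pos[of \<theta> n] assms in auto)
  also have "\<dots> \<le> Kprob n \<theta> k"
    unfolding Kprob_def using stirling_ge[of k n] pochhammer_pos[of \<theta> n] assms
    by (intro divide_right_mono mult_right_mono) (auto simp flip: of_nat_power)
  finally show ?thesis .
qed

lemma lawK_le_powr:
  assumes "0 < \<theta>" "real n \<le> \<theta>" "\<forall>x\<in>F. c \<le> 1 - x"
  shows "lawK n \<theta> F \<le> n * 2 ^ n * (n / \<theta>) powr (n * c)"
proof -
  have "lawK n \<theta> F \<le> (\<Sum>k\<in>{1..n}. 2 ^ n * (n / \<theta>) powr (n * c))"
    unfolding lawK_def
  proof (intro sum_mono)
    fix k assume k: "k \<in> {1..n}"
    show "(if k / n \<in> F then Kprob n \<theta> k else 0) \<le> 2 ^ n * (n / \<theta>) powr (n * c)"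
    proof (cases "k / n \<in> F")
      case True
      then have "n * c \<le> n * (1 - k / n)"
        using assms(3) by (intro mult_left_mono) auto
      also have "\<dots> = real (n - k)"
        using k by (simp add: field_simps of_nat_diff)
      finally have "(n / \<theta>) ^ (n - k) \<le> (n / \<theta>) powr (n * c)"
        using k assms by (simp add: powr_realpow[symmetric] powr_mono')
      then show ?thesis
        using True order.trans[OF Kprob_le[of \<theta> k n]] k assms by simp
    qed simp
  qed
  then show ?thesis by simp
qed

lemma lawK_ge_powr:
  fixes k n :: nat and y :: real
  assumes "0 \<le> y" "y \<le> 1" "y * n \<le> k" "1 \<le> k" "k \<le> n" "real n \<le> \<theta>" "k / n \<in> A"
  shows "(y * n / \<theta>) powr (n * (1 - y)) / 2 ^ n \<le> lawK n \<theta> A"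
proof -
  have "(y * n / \<theta>) powr (n * (1 - y)) \<le> (k / \<theta>) powr (n * (1 - y))"
    using assms by (intro powr_mono2 divide_right_mono) auto
  also have "\<dots> \<le> (k / \<theta>) powr real (n - k)"
    using assms by (intro powr_mono') (auto simp: algebra_simps of_nat_diff)
  also have "\<dots> = (k / \<theta>) ^ (n - k)"
    using assms by (intro powr_realpow) simp
  finally have "(y * n / \<theta>) powr (n * (1 - y)) / 2 ^ n \<le> (k / \<theta>) ^ (n - k) / 2 ^ n"
    by (simp add: divide_right_mono)
  also have "\<dots> \<le> Kprob n \<theta> k"
    using Kprob_ge[of \<theta> k n] assms by simp
  also have "\<dots> \<le> lawK n \<theta> A"
    using Kprob_le_lawK[of \<theta> k n A] assms by simp
  finally show ?thesis .
qed

lemma elog_divide_le: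
  assumes "0 \<le> p" "p \<le> B" "0 < a"
  shows "elog p / ereal a \<le> ereal (ln B / a)"
proof (cases "p = 0")
  case True
  then show ?thesis
    using assms by (simp add: elog_def divide_ereal_def)
next
  case False
  then show ?thesis
    using assms by (auto simp: elog_def intro!: divide_right_mono)
qed

lemma elog_divide_ge:
  assumes "0 < b" "b \<le> p" "0 < a"
  shows "ereal (ln b / a) \<le> elog p / ereal a"
  using assms by (auto simp: elog_def divide_right_mono)

lemma Limsup_elog_divide_le:
  assumes "F \<noteq> bot" "eventually (\<lambda>x. 0 \<le> p x \<and> p x \<le> B x \<and> 0 < a x) F"
    and "((\<lambda>x. ln (B x) / a x) \<longlongrightarrow> l) F"
  shows "Limsup F (\<lambda>x. elog (p x) / ereal (a x)) \<le> ereal l"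
proof -
  have "Limsup F (\<lambda>x. elog (p x) / ereal (a x)) \<le> Limsup F (\<lambda>x. ereal (ln (B x) / a x))"
    using assms(2) by (intro Limsup_mono) (auto elim!: eventually_mono intro: elog_divide_le)
  also have "\<dots> = ereal l"
    using assms by (intro lim_imp_Limsup) (auto intro: tendsto_ereal)
  finally show ?thesis .
qed

lemma Liminf_elog_divide_ge:
  assumes "F \<noteq> bot" "eventually (\<lambda>x. 0 < b x \<and> b x \<le> p x \<and> 0 < a x) F"
    and "((\<lambda>x. ln (b x) / a x) \<longlongrightarrow> l) F"
  shows "ereal l \<le> Liminf F (\<lambda>x. elog (p x) / ereal (a x))"
proof -
  have "ereal l = Liminf F (\<lambda>x. ereal (ln (b x) / a x))"
    using assms by (intro lim_imp_Liminf[symmetric]) (auto intro: tendsto_ereal)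
  also have "\<dots> \<le> Liminf F (\<lambda>x. elog (p x) / ereal (a x))"
    using assms(2) by (intro Liminf_mono) (auto elim!: eventually_mono intro: elog_divide_ge)
  finally show ?thesis .
qed

text \<open>Quantifying over real lower bounds \<open>c\<close> of \<open>I\<close> on \<open>F\<close> also covers \<open>F = {}\<close>,
  where the infimum is \<open>\<infinity>\<close>.\<close>

lemma LDP01_intro:
  assumes upper: "\<And>F c. closedin (top_of_set {0..1}) F \<Longrightarrow> \<forall>x\<in>F. c \<le> I x \<Longrightarrow>
      Limsup at_top (\<lambda>\<theta>. elog (\<mu> \<theta> F) / ereal (a \<theta>)) \<le> ereal (- c)"
    and lower: "\<And>G x. openin (top_of_set {0..1}) G \<Longrightarrow> x \<in> G \<Longrightarrow>
      ereal (- I x) \<le> Liminf at_top (\<lambda>\<theta>. elog (\<mu> \<theta> G) / ereal (a \<theta>))"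
  shows "LDP01 \<mu> a I"
  unfolding LDP01_def
proof (intro conjI allI impI)
  fix F :: "real set" assume F: "closedin (top_of_set {0..1}) F"
  show "Limsup at_top (\<lambda>\<theta>. elog (\<mu> \<theta> F) / ereal (a \<theta>)) \<le> - (INF x\<in>F. ereal (I x))"
  proof (rule ereal_le_real)
    fix z assume "- (INF x\<in>F. ereal (I x)) \<le> ereal z"
    then have "\<forall>x\<in>F. - z \<le> I x"
      by (metis INF_lower ereal_less_eq(3) ereal_uminus_le_reorder order_trans uminus_ereal.simps(1))
    then show "Limsup at_top (\<lambda>\<theta>. elog (\<mu> \<theta> F) / ereal (a \<theta>)) \<le> ereal z"
      using upper[OF F] by fastforce
  qed
next
  fix G :: "real set" assume "openin (top_of_set {0..1}) G"
  then show "- (INF x\<in>G. ereal (I x)) \<le> Liminf at_top (\<lambda>\<theta>. elog (\<mu> \<theta> G) / ereal (a \<theta>))"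
    unfolding ereal_SUP_uminus_eq[symmetric] using lower by (auto intro: SUP_least)
qed

lemma openin_unit_interval_obtain_pos:
  fixes x :: real
  assumes "openin (top_of_set {0..1}) G" "x \<in> G"
  obtains y where "y \<in> G" "0 < y" "x \<le> y"
proof (cases "x = 0")
  case True
  obtain e where "0 < e" and e: "\<forall>x'\<in>{0..1}. dist x' x < e \<longrightarrow> x' \<in> G"
    using assms by (auto simp: openin_euclidean_subtopology_iff)
  then show ?thesis
    using that[of "min (e / 2) 1"] True by (auto simp: dist_real_def)
next
  case False
  then show ?thesis
    using that assms openin_imp_subset[OF assms(1)] by force
qed

context
  fixes n :: "real \<Rightarrow> nat"
  assumes n_at_top: "filterlim n at_top at_top"
    and ratio_at_top: "filterlim (\<lambda>\<theta>. \<theta> / real (n \<theta>)) at_top at_top"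
begin

lemma eventually_n_pos_less:
  "eventually (\<lambda>\<theta>. 0 < n \<theta> \<and> real (n \<theta>) < \<theta> \<and> 0 < ln (\<theta> / n \<theta>)) at_top"
proof -
  have "eventually (\<lambda>\<theta>. 1 < \<theta> / n \<theta>) at_top"
    using ratio_at_top by (simp add: filterlim_at_top_dense)
  then show ?thesis
  proof eventually_elim
    case (elim \<theta>)
    then have "0 < n \<theta>"
      by (cases "n \<theta> = 0") auto
    with elim show ?case
      by (simp add: field_simps)
  qed
qed

lemma real_n_at_top: "filterlim (\<lambda>\<theta>. real (n \<theta>)) at_top at_top"
  by (rule filterlim_compose[OF filterlim_real_sequentially n_at_top])

lemma inverse_ln_ratio_tendsto_0: "((\<lambda>\<theta>. 1 / ln (\<theta> / n \<theta>)) \<longlongrightarrow> 0) at_top"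
  using tendsto_inverse_0_at_top[OF filterlim_compose[OF ln_at_top ratio_at_top]]
  by (simp add: inverse_eq_divide)

lemma lawK_Limsup_le:
  assumes "\<forall>x\<in>F. c \<le> 1 - x"
  shows "Limsup at_top (\<lambda>\<theta>. elog (lawK (n \<theta>) \<theta> F) / ereal (n \<theta> * ln (\<theta> / n \<theta>)))
    \<le> ereal (- c)"
proof (rule Limsup_elog_divide_le)
  define B where "B \<theta> = n \<theta> * 2 ^ n \<theta> * (n \<theta> / \<theta>) powr (n \<theta> * c)" for \<theta>
  show "eventually (\<lambda>\<theta>. 0 \<le> lawK (n \<theta>) \<theta> F \<and> lawK (n \<theta>) \<theta> F \<le> B \<theta> \<and>
      0 < n \<theta> * ln (\<theta> / n \<theta>)) at_top"
    using eventually_n_pos_less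
    by eventually_elim (use assms in \<open>auto simp: B_def intro: lawK_nonneg lawK_le_powr\<close>)
  have "((\<lambda>\<theta>. ln (n \<theta>) / n \<theta> * (1 / ln (\<theta> / n \<theta>)) + ln 2 * (1 / ln (\<theta> / n \<theta>)) - c)
      \<longlongrightarrow> 0 * 0 + ln 2 * 0 - c) at_top"
    by (intro tendsto_intros inverse_ln_ratio_tendsto_0
        filterlim_compose[OF ln_x_over_x_tendsto_0 real_n_at_top])
  moreover have "eventually (\<lambda>\<theta>. ln (n \<theta>) / n \<theta> * (1 / ln (\<theta> / n \<theta>)) + ln 2 * (1 / ln (\<theta> / n \<theta>)) - c
      = ln (B \<theta>) / (n \<theta> * ln (\<theta> / n \<theta>))) at_top"
    using eventually_n_pos_less
  proof eventually_elim
    case (elim \<theta>)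
    then have ln_B: "ln (B \<theta>) = ln (n \<theta>) + n \<theta> * ln 2 - n \<theta> * c * ln (\<theta> / n \<theta>)"
      by (simp add: B_def ln_mult ln_realpow ln_div algebra_simps)
    show ?case
      unfolding ln_B using elim by (simp add: field_simps)
  qed
  ultimately show "((\<lambda>\<theta>. ln (B \<theta>) / (n \<theta> * ln (\<theta> / n \<theta>))) \<longlongrightarrow> - c) at_top"
    by (simp add: tendsto_cong)
qed simp

lemma eventually_lawK_ge_powr:
  fixes y :: real
  assumes "openin (top_of_set {0..1}) G" "y \<in> G" "0 < y"
  shows "eventually (\<lambda>\<theta>. (y * n \<theta> / \<theta>) powr (n \<theta> * (1 - y)) / 2 ^ n \<theta> \<le> lawK (n \<theta>) \<theta> G) at_top"
proof -
  obtain e where "0 < e" and ball: "\<forall>x\<in>{0..1}. dist x y < e \<longrightarrow> x \<in> G"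
    using assms by (auto simp: openin_euclidean_subtopology_iff)
  have "y \<le> 1"
    using assms openin_imp_subset by force
  have "eventually (\<lambda>\<theta>. 1 / e < n \<theta>) at_top"
    using real_n_at_top by (simp add: filterlim_at_top_dense)
  then show ?thesis
    using eventually_n_pos_less
  proof eventually_elim
    case (elim \<theta>)
    define k where "k = nat \<lceil>y * n \<theta>\<rceil>"
    have "real k = of_int \<lceil>y * n \<theta>\<rceil>"
      using \<open>0 < y\<close> by (simp add: k_def)
    then have k: "y * n \<theta> \<le> k" "k < y * n \<theta> + 1"
      using ceiling_correct[of "y * n \<theta>"] by linarith+
    have "k \<le> n \<theta>"
      using \<open>0 < y\<close> \<open>y \<le> 1\<close> by (simp add: k_def nat_le_iff ceiling_le_iff mult_left_le_one_le)
    have "0 < y * n \<theta>"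
      using \<open>0 < y\<close> elim by simp
    then have "1 \<le> k"
      using k(1) by (metis One_nat_def Suc_leI less_le_trans of_nat_0_less_iff)
    have "dist (k / n \<theta>) y < e"
      using k elim \<open>0 < e\<close> by (simp add: dist_real_def abs_less_iff field_simps)
    then have "k / n \<theta> \<in> G"
      using ball \<open>k \<le> n \<theta>\<close> elim by auto
    then show ?case
      using lawK_ge_powr[of y "n \<theta>" k \<theta> G] k \<open>k \<le> n \<theta>\<close> \<open>1 \<le> k\<close> \<open>0 < y\<close> \<open>y \<le> 1\<close> elim
      by simp
  qed
qed

lemma lawK_Liminf_ge:
  assumes "openin (top_of_set {0..1}) G" "y \<in> G" "0 < y"
  shows "ereal (- (1 - y))
    \<le> Liminf at_top (\<lambda>\<theta>. elog (lawK (n \<theta>) \<theta> G) / ereal (n \<theta> * ln (\<theta> / n \<theta>)))"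
proof (rule Liminf_elog_divide_ge)
  define b where "b \<theta> = (y * n \<theta> / \<theta>) powr (n \<theta> * (1 - y)) / 2 ^ n \<theta>" for \<theta>
  show "eventually (\<lambda>\<theta>. 0 < b \<theta> \<and> b \<theta> \<le> lawK (n \<theta>) \<theta> G \<and> 0 < n \<theta> * ln (\<theta> / n \<theta>)) at_top"
    using eventually_lawK_ge_powr[OF assms] eventually_n_pos_less
    by eventually_elim (use \<open>0 < y\<close> in \<open>simp add: b_def\<close>)
  have "((\<lambda>\<theta>. (1 - y) * (ln y * (1 / ln (\<theta> / n \<theta>)) - 1) - ln 2 * (1 / ln (\<theta> / n \<theta>)))
      \<longlongrightarrow> (1 - y) * (ln y * 0 - 1) - ln 2 * 0) at_top"
    by (intro tendsto_intros inverse_ln_ratio_tendsto_0)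
  moreover have "eventually (\<lambda>\<theta>. (1 - y) * (ln y * (1 / ln (\<theta> / n \<theta>)) - 1) - ln 2 * (1 / ln (\<theta> / n \<theta>))
      = ln (b \<theta>) / (n \<theta> * ln (\<theta> / n \<theta>))) at_top"
    using eventually_n_pos_less
  proof eventually_elim
    case (elim \<theta>)
    then have ln_b: "ln (b \<theta>) = n \<theta> * (1 - y) * (ln y - ln (\<theta> / n \<theta>)) - n \<theta> * ln 2"
      using \<open>0 < y\<close> by (simp add: b_def ln_mult ln_realpow ln_div)
    show ?case
      unfolding ln_b using elim by (simp add: field_simps)
  qed
  ultimately show "((\<lambda>\<theta>. ln (b \<theta>) / (n \<theta> * ln (\<theta> / n \<theta>))) \<longlongrightarrow> - (1 - y)) at_top"
    by (simp add: tendsto_cong)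
qed simp

end

theorem theorem4p3:
  fixes n :: "real \<Rightarrow> nat"
  assumes "\<forall>\<theta>>0. n \<theta> > 0"
    and "filterlim n at_top at_top"
    and "filterlim (\<lambda>\<theta>. \<theta> / real (n \<theta>)) at_top at_top"
  shows "LDP01 (\<lambda>\<theta>. lawK (n \<theta>) \<theta>) (\<lambda>\<theta>. real (n \<theta>) * ln (\<theta> / real (n \<theta>))) (\<lambda>x. 1 - x)"
proof (rule LDP01_intro)
  fix F :: "real set" and c :: real
  assume "\<forall>x\<in>F. c \<le> 1 - x"
  then show "Limsup at_top (\<lambda>\<theta>. elog (lawK (n \<theta>) \<theta> F) / ereal (n \<theta> * ln (\<theta> / n \<theta>)))
      \<le> ereal (- c)"
    by (rule lawK_Limsup_le[OF assms(2,3)])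
next
  fix G :: "real set" and x :: real
  assume G: "openin (top_of_set {0..1}) G" "x \<in> G"
  then obtain y where y: "y \<in> G" "0 < y" "x \<le> y"
    by (rule openin_unit_interval_obtain_pos)
  have "ereal (- (1 - x)) \<le> ereal (- (1 - y))"
    using y by simp
  also have "\<dots> \<le> Liminf at_top (\<lambda>\<theta>. elog (lawK (n \<theta>) \<theta> G) / ereal (n \<theta> * ln (\<theta> / n \<theta>)))"
    by (rule lawK_Liminf_ge[OF assms(2,3) G(1) y(1,2)])
  finally show "ereal (- (1 - x))
      \<le> Liminf at_top (\<lambda>\<theta>. elog (lawK (n \<theta>) \<theta> G) / ereal (n \<theta> * ln (\<theta> / n \<theta>)))" .
qed

end
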